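(* Let $\ell,r$ be integers with $r\ge 2$ and $\ell\ge 2r$, and let $m=m_{r,\ell}$. Define $H(q)=(m-q)\,(q)_{r-1}$ for integers $q\in[0,m]$. Then $H(q)<H(m-1)$ for all integers $q\in[0,m]\setminus\{m-1\}$.
   Context: For an integer $z$ and positive integer $k$, $(z)_k=z(z-1)\cdots(z-k+1)$ if $z>k-1$ and $(z)_k=0$ otherwise. $m_{r,\ell}$ is the unique integer $k\ge r$ maximizing $f(k)=\frac{(k-1)(k-2)\cdots(k-r+1)}{k^{\ell-1}}$ over all integers $k\ge r$. *)

theory Defs
  imports Complex_Main
begin

definition falling_int :: "int \<Rightarrow> nat \<Rightarrow> int" where
  "falling_int z k = (if z > int k - 1 then (\<Prod>i<k. z - int i) else 0)"

definition f_rl :: "nat \<Rightarrow> nat \<Rightarrow> int \<Rightarrow> real" where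
  "f_rl r l k = (\<Prod>i\<in>{1..r-1}. real_of_int (k - int i)) / (real_of_int k) ^ (l - 1)"

definition m_rl :: "nat \<Rightarrow> nat \<Rightarrow> int" where
  "m_rl r l = (THE k. k \<ge> int r \<and> (\<forall>j. j \<ge> int r \<longrightarrow> f_rl r l j \<le> f_rl r l k))"

end

theory Submission
  imports Defs
begin

text \<open>Write s = r - 1 and n = l - 1, so that f(k) = (k-1)...(k-s) / k^n. Then f(k+1) < f(k)
  iff k^(n+1) < (k - s)(k+1)^n, i.e. iff s < k - k^(n+1)/(k+1)^n = \<Sum>j=1..n. (k/(k+1))^j.
  The right-hand side increases with k, equality never occurs because k and k+1 are coprime,
  and Bernoulli's inequality gives the strict inequality at k = 2s since n > 2s. Hence f
  increases strictly up to its maximiser m and decreases strictly afterwards, with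
  r \<le> m \<le> 2s. For s \<le> q \<le> m - 2 the ratio H(q+1)/H(q) = (m-q-1)(q+1)/((m-q)(q+1-s))
  exceeds 1 because q + 1 < 2s \<le> (m-q)s, while H vanishes for q < s and at q = m.\<close>

lemma int_stepwise_trans:
  fixes g :: "int \<Rightarrow> 'a"
  assumes "transp R"
    and link: "\<And>k. a \<le> k \<Longrightarrow> k < b \<Longrightarrow> R (g k) (g (k + 1))"
    and "a < b"
  shows "R (g a) (g b)"
proof -
  have "c \<le> b \<longrightarrow> R (g a) (g c)" if "a < c" for c
    using that
  proof (induction c rule: int_gr_induct)
    case base
    show ?case using link[of a] by simp
  next
    case (step c)
    then show ?case using \<open>transp R\<close> link[of c] by (auto elim: transpE)
  qed
  then show ?thesis using \<open>a < b\<close> by simp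
qed

lemma the_argmax_of_unimodal:
  fixes g :: "int \<Rightarrow> 'a::linorder"
  assumes "a \<le> m"
    and up: "\<And>k. a \<le> k \<Longrightarrow> k < m \<Longrightarrow> g k < g (k + 1)"
    and down: "\<And>k. m \<le> k \<Longrightarrow> g (k + 1) < g k"
  shows "(THE k. a \<le> k \<and> (\<forall>j. a \<le> j \<longrightarrow> g j \<le> g k)) = m"
proof -
  have below: "g j < g m" if "a \<le> j" "j < m" for j
    using int_stepwise_trans[of "(<)" j m g] up that by (simp add: transp_on_less)
  have above: "g j < g m" if "m < j" for j
    using int_stepwise_trans[of "\<lambda>x y. y < x" m j g] down that
    by (simp add: transp_def)
  have strict_max: "g j < g m" if "a \<le> j" "j \<noteq> m" for j
    using below above that by (cases "j < m") auto
  show ?thesis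
  proof (rule the_equality)
    show "a \<le> m \<and> (\<forall>j. a \<le> j \<longrightarrow> g j \<le> g m)"
      using \<open>a \<le> m\<close> strict_max by (metis order.order_iff_strict)
  next
    fix k assume "a \<le> k \<and> (\<forall>j. a \<le> j \<longrightarrow> g j \<le> g k)"
    then show "k = m" using strict_max[of k] \<open>a \<le> m\<close> by (meson leD)
  qed
qed

lemma int_threshold_exists:
  fixes P :: "int \<Rightarrow> bool"
  assumes up: "\<And>k. a \<le> k \<Longrightarrow> P k \<Longrightarrow> P (k + 1)" and "a \<le> d" "P d"
  obtains m where "a \<le> m" "m \<le> d" "\<And>k. a \<le> k \<Longrightarrow> P k \<longleftrightarrow> m \<le> k"
proof
  define t where "t = (LEAST t. P (a + int t))"
  have ex: "P (a + int (nat (d - a)))" using assms by simp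
  have "P (a + int t)" unfolding t_def using ex by (rule LeastI)
  show "a \<le> a + int t" by simp
  show "a + int t \<le> d"
    using Least_le[of "\<lambda>t. P (a + int t)", OF ex] \<open>a \<le> d\<close> unfolding t_def by linarith
  fix k assume "a \<le> k"
  show "P k \<longleftrightarrow> a + int t \<le> k"
  proof
    assume "P k"
    then have "t \<le> nat (k - a)"
      unfolding t_def using \<open>a \<le> k\<close> by (intro Least_le) simp
    then show "a + int t \<le> k" using \<open>a \<le> k\<close> by (simp add: le_nat_iff)
  next
    assume "a + int t \<le> k"
    then show "P k"
    proof (induction k rule: int_ge_induct)
      case base
      show ?case by (fact \<open>P (a + int t)\<close>)
    next
      case (step i)
      then show ?case using up[of i] by simp
    qed
  qed
qed

lemma sub_power_div_eq_sum:
  fixes x :: "'a::field"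
  assumes "x + 1 \<noteq> 0"
  shows "x - x ^ Suc n / (x + 1) ^ n = (\<Sum>j=1..n. (x / (x + 1)) ^ j)"
proof (induction n)
  case 0
  show ?case by simp
next
  case (Suc n)
  have "x ^ Suc n / (x + 1) ^ n = x ^ Suc n * (x + 1) / (x + 1) ^ Suc n"
    using assms by simp
  then have "x ^ Suc n / (x + 1) ^ n - x ^ Suc (Suc n) / (x + 1) ^ Suc n
      = (x ^ Suc n * (x + 1) - x ^ Suc (Suc n)) / (x + 1) ^ Suc n"
    by (simp add: diff_divide_distrib)
  also have "\<dots> = (x / (x + 1)) ^ Suc n"
    by (simp add: algebra_simps power_divide)
  finally have "x - x ^ Suc (Suc n) / (x + 1) ^ Suc n
      = (x - x ^ Suc n / (x + 1) ^ n) + (x / (x + 1)) ^ Suc n"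
    by (simp add: algebra_simps)
  then show ?case using Suc.IH by (simp del: power_Suc add: sum.cl_ivl_Suc)
qed

lemma sub_power_div_mono:
  fixes x y :: real
  assumes "0 \<le> x" "x \<le> y"
  shows "x - x ^ Suc n / (x + 1) ^ n \<le> y - y ^ Suc n / (y + 1) ^ n"
proof -
  have "x / (x + 1) \<le> y / (y + 1)" using assms by (simp add: field_simps)
  then have "(\<Sum>j=1..n. (x / (x + 1)) ^ j) \<le> (\<Sum>j=1..n. (y / (y + 1)) ^ j)"
    using assms by (intro sum_mono power_mono) auto
  then show ?thesis
    using assms sub_power_div_eq_sum[of x n] sub_power_div_eq_sum[of y n] by simp
qed

lemma power_Suc_less_shift_iff:
  fixes x c :: real
  assumes "0 \<le> x"
  shows "x ^ Suc n < (x - c) * (x + 1) ^ n \<longleftrightarrow> c < x - x ^ Suc n / (x + 1) ^ n"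
proof -
  have "0 < (x + 1) ^ n" using assms by simp
  then have "x ^ Suc n < (x - c) * (x + 1) ^ n \<longleftrightarrow> x ^ Suc n / (x + 1) ^ n < x - c"
    by (simp add: pos_divide_less_eq)
  then show ?thesis by linarith
qed

lemma power_Suc_less_shift_mono:
  fixes x y c :: real
  assumes "0 \<le> x" "x \<le> y" "x ^ Suc n < (x - c) * (x + 1) ^ n"
  shows "y ^ Suc n < (y - c) * (y + 1) ^ n"
  using assms sub_power_div_mono[OF assms(1,2), of n] power_Suc_less_shift_iff[of x n c]
    power_Suc_less_shift_iff[of y n c] by simp

lemma two_power_less_Suc_power:
  fixes x :: real
  assumes "0 < x" "x < real n"
  shows "2 * x ^ n < (x + 1) ^ n"
proof -
  have "2 < 1 + real n * (1 / x)" using assms by (simp add: field_simps)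
  also have "\<dots> \<le> (1 + 1 / x) ^ n"
    using assms by (intro Bernoulli_inequality) (simp add: order_trans[of _ 0])
  finally have "2 * x ^ n < (1 + 1 / x) ^ n * x ^ n" using assms by simp
  also have "\<dots> = (x + 1) ^ n"
    using assms by (simp add: power_mult_distrib[symmetric] field_simps)
  finally show ?thesis .
qed

lemma power_Suc_neq_shift:
  fixes k c :: int
  assumes "1 \<le> k" "1 \<le> n"
  shows "k ^ Suc n \<noteq> (k - c) * (k + 1) ^ n"
proof
  assume eq: "k ^ Suc n = (k - c) * (k + 1) ^ n"
  have "k + 1 dvd k ^ Suc n"
    unfolding eq using assms by (simp add: dvd_power)
  moreover have "coprime (k + 1) (k ^ Suc n)" by (simp add: coprime_add_one_left)
  ultimately have "is_unit (k + 1)" by (meson coprime_common_divisor dvd_refl)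
  then show False using assms by auto
qed

lemma prod_shift_succ:
  fixes x :: "'a::comm_ring_1"
  shows "(\<Prod>i=1..s. x + 1 - of_nat i) * (x - of_nat s) = x * (\<Prod>i=1..s. x - of_nat i)"
proof (induction s)
  case 0
  show ?case by simp
next
  case (Suc s)
  then show ?case by (simp add: prod.cl_ivl_Suc algebra_simps)
qed

lemma f_rl_pos:
  assumes "int s < k"
  shows "0 < f_rl (Suc s) l k"
  using assms unfolding f_rl_def by (intro divide_pos_pos prod_pos) auto

lemma f_rl_succ_eq:
  assumes "0 < k"
  shows "f_rl (Suc s) (Suc n) (k + 1) * ((of_int k - real s) * (of_int k + 1) ^ n)
       = f_rl (Suc s) (Suc n) k * of_int k ^ Suc n"
proof -
  define x where "x = real_of_int k"
  have "x > 0" using assms unfolding x_def by simp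
  have "f_rl (Suc s) (Suc n) (k + 1) = (\<Prod>i=1..s. x + 1 - of_nat i) / (x + 1) ^ n"
    unfolding f_rl_def x_def by simp
  then have "f_rl (Suc s) (Suc n) (k + 1) * ((x - real s) * (x + 1) ^ n)
      = (\<Prod>i=1..s. x + 1 - of_nat i) * (x - real s)"
    using \<open>x > 0\<close> by simp
  also have "\<dots> = x * (\<Prod>i=1..s. x - of_nat i)" by (rule prod_shift_succ)
  also have "\<dots> = f_rl (Suc s) (Suc n) k * x ^ Suc n"
    using \<open>x > 0\<close> unfolding f_rl_def x_def by simp
  finally show ?thesis unfolding x_def .
qed

lemma f_rl_succ_compare:
  assumes "int s < k"
  shows "f_rl (Suc s) (Suc n) (k + 1) < f_rl (Suc s) (Suc n) k
           \<longleftrightarrow> of_int k ^ Suc n < (of_int k - real s) * (of_int k + 1) ^ n"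
    and "f_rl (Suc s) (Suc n) k < f_rl (Suc s) (Suc n) (k + 1)
           \<longleftrightarrow> (of_int k - real s) * (of_int k + 1) ^ n < of_int k ^ Suc n"
proof -
  let ?A = "(of_int k - real s) * (of_int k + 1) ^ n" and ?B = "real_of_int k ^ Suc n"
  have "0 < ?A" using assms by simp
  have "0 < f_rl (Suc s) (Suc n) k" using assms by (rule f_rl_pos)
  have eq: "f_rl (Suc s) (Suc n) (k + 1) * ?A = f_rl (Suc s) (Suc n) k * ?B"
    using assms by (intro f_rl_succ_eq) linarith
  show "f_rl (Suc s) (Suc n) (k + 1) < f_rl (Suc s) (Suc n) k \<longleftrightarrow> ?B < ?A"
    using eq \<open>0 < ?A\<close> \<open>0 < f_rl (Suc s) (Suc n) k\<close>
    by (metis mult_less_cancel_left_pos mult_less_cancel_right_pos)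
  show "f_rl (Suc s) (Suc n) k < f_rl (Suc s) (Suc n) (k + 1) \<longleftrightarrow> ?A < ?B"
    using eq \<open>0 < ?A\<close> \<open>0 < f_rl (Suc s) (Suc n) k\<close>
    by (metis mult_less_cancel_left_pos mult_less_cancel_right_pos)
qed

lemma m_rl_bounds:
  assumes "2 \<le> r" "2 * r \<le> l"
  shows "int r \<le> m_rl r l" "m_rl r l \<le> 2 * int r - 2"
proof -
  define s n where "s = r - 1" and "n = l - 1"
  have r: "r = Suc s" and l: "l = Suc n" and "1 \<le> s" "2 * s < n"
    using assms unfolding s_def n_def by auto
  define D where
    "D k \<longleftrightarrow> real_of_int k ^ Suc n < (of_int k - real s) * (of_int k + 1) ^ n" for k
  have D_step: "D (k + 1)" if "int r \<le> k" "D k" for k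
    using that power_Suc_less_shift_mono[of "of_int k" "of_int k + 1" n "real s"]
    unfolding D_def by simp
  have "2 * (2 * real s) ^ n < (2 * real s + 1) ^ n"
    using \<open>1 \<le> s\<close> \<open>2 * s < n\<close> by (intro two_power_less_Suc_power) auto
  then have "D (2 * int s)"
    unfolding D_def using \<open>1 \<le> s\<close> by (simp add: algebra_simps)
  moreover have "int r \<le> 2 * int s" using \<open>1 \<le> s\<close> r by simp
  ultimately obtain m where "int r \<le> m" "m \<le> 2 * int s"
    and D_iff: "\<And>k. int r \<le> k \<Longrightarrow> D k \<longleftrightarrow> m \<le> k"
    using int_threshold_exists[of "int r" D, OF D_step] by blast
  have "m_rl r l = m"
    unfolding m_rl_def
  proof (rule the_argmax_of_unimodal)
    show "int r \<le> m" by fact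
  next
    fix k assume "int r \<le> k" "k < m"
    then have "\<not> D k" using D_iff by simp
    have "k ^ Suc n \<noteq> (k - int s) * (k + 1) ^ n"
      using \<open>int r \<le> k\<close> \<open>2 * s < n\<close> r by (intro power_Suc_neq_shift) auto
    then have "real_of_int (k ^ Suc n) \<noteq> of_int ((k - int s) * (k + 1) ^ n)"
      unfolding of_int_eq_iff .
    then have "real_of_int k ^ Suc n \<noteq> (of_int k - real s) * (of_int k + 1) ^ n"
      by simp
    with \<open>\<not> D k\<close> show "f_rl r l k < f_rl r l (k + 1)"
      using f_rl_succ_compare(2)[of s k n] \<open>int r \<le> k\<close> unfolding D_def r l by linarith
  next
    fix k assume "m \<le> k"
    then have "D k" using D_iff \<open>int r \<le> m\<close> by simp
    then show "f_rl r l (k + 1) < f_rl r l k"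
      using f_rl_succ_compare(1)[of s k n] \<open>int r \<le> m\<close> \<open>m \<le> k\<close>
      unfolding D_def r l by simp
  qed
  then show "int r \<le> m_rl r l" "m_rl r l \<le> 2 * int r - 2"
    using \<open>int r \<le> m\<close> \<open>m \<le> 2 * int s\<close> r by auto
qed

lemma falling_int_eq_0: "z < int k \<Longrightarrow> falling_int z k = 0"
  unfolding falling_int_def by simp

lemma falling_int_pos: "int k \<le> z \<Longrightarrow> 0 < falling_int z k"
  unfolding falling_int_def by (auto intro: prod_pos)

lemma falling_int_succ:
  assumes "int k \<le> z"
  shows "falling_int (z + 1) k * (z + 1 - int k) = (z + 1) * falling_int z k"
proof -
  have "(\<Prod>i<k. z + 1 - int i) * (z + 1 - int k) = (z + 1) * (\<Prod>i<k. z - int i)"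
  proof (induction k)
    case 0
    show ?case by simp
  next
    case (Suc k)
    then show ?case by (simp add: algebra_simps)
  qed
  then show ?thesis using assms unfolding falling_int_def by simp
qed

lemma gap_times_falling_int_less_succ:
  fixes m q :: int
  assumes "int s \<le> q" "q + 2 \<le> m" "m \<le> 2 * int s"
  shows "(m - q) * falling_int q s < (m - (q + 1)) * falling_int (q + 1) s"
proof -
  have "q + 1 < 2 * int s" using assms by linarith
  also have "\<dots> \<le> (m - q) * int s" using assms by (intro mult_right_mono) auto
  finally have "(m - q) * (q + 1 - int s) < (m - (q + 1)) * (q + 1)"
    by (simp add: algebra_simps)
  then have "(m - q) * (q + 1 - int s) * falling_int q s
      < (m - (q + 1)) * (q + 1) * falling_int q s"
    using falling_int_pos[OF \<open>int s \<le> q\<close>] by (rule mult_strict_right_mono)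
  then have "(m - q) * falling_int q s * (q + 1 - int s)
      < (m - (q + 1)) * ((q + 1) * falling_int q s)"
    by (simp only: mult_ac)
  also have "\<dots> = (m - (q + 1)) * falling_int (q + 1) s * (q + 1 - int s)"
    using falling_int_succ[OF \<open>int s \<le> q\<close>] by simp
  finally have "(m - q) * falling_int q s * (q + 1 - int s)
      < (m - (q + 1)) * falling_int (q + 1) s * (q + 1 - int s)" .
  moreover have "0 < q + 1 - int s" using assms by simp
  ultimately show ?thesis by (simp only: mult_less_cancel_right_pos)
qed

theorem lemma4p4:
  fixes l r :: nat and m :: int and H :: "int \<Rightarrow> int"
  assumes "r \<ge> 2" and "l \<ge> 2 * r"
    and "m = m_rl r l"
    and "\<And>q. H q = (m - q) * falling_int q (r - 1)"
  shows "\<forall>q. 0 \<le> q \<and> q \<le> m \<and> q \<noteq> m - 1 \<longrightarrow> H q < H (m - 1)"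
proof (intro allI impI)
  fix q assume q: "0 \<le> q \<and> q \<le> m \<and> q \<noteq> m - 1"
  define s where "s = r - 1"
  have m_bounds: "int s < m" "m \<le> 2 * int s"
    using m_rl_bounds[OF assms(1,2)] assms(1,3) unfolding s_def by auto
  have H_top: "0 < H (m - 1)"
    using assms(4) m_bounds falling_int_pos[of s "m - 1"] unfolding s_def by simp
  consider "q < int s" | "q = m" | "int s \<le> q" "q + 2 \<le> m"
    using q by linarith
  then show "H q < H (m - 1)"
  proof cases
    case 1
    then show ?thesis using H_top assms(4) falling_int_eq_0 unfolding s_def by simp
  next
    case 2
    then show ?thesis using H_top assms(4) by simp
  next
    case 3
    have "H k < H (k + 1)" if "q \<le> k" "k < m - 1" for k
      using gap_times_falling_int_less_succ[of s k m] 3 that m_bounds assms(4)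
      unfolding s_def by simp
    then show ?thesis
      using int_stepwise_trans[of "(<)" q "m - 1" H] 3 by (simp add: transp_on_less)
  qed
qed

end
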